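(* Let $\mathfrak{l}$ be a finite-dimensional restricted Lie algebra over an algebraically closed field $\mathbb{K}$ of characteristic $p$ with prime subfield $\mathbb{F}$, and let $\chi\in\mathfrak{l}^\ast$ be arbitrary. Then $u(\mathfrak{l}_\chi)$ is isomorphic as an algebra to $\bigoplus_{i\in\mathbb{F}}U_{i\chi}(\mathfrak{l})$.
   Context: $\mathfrak{l}_\chi=\mathfrak{l}\oplus\mathbb{K}c$ is the restricted Lie algebra with bracket $[a+\alpha c,b+\beta c]=[a,b]$ and $p$-map $(a+\alpha c)^{[p]}=a^{[p]}+(\chi(a)^p+\alpha^p)c$; $u(\cdot)$ is the restricted enveloping algebra. For $\xi\in\mathfrak{l}^\ast$, the reduced enveloping algebra $U_\xi(\mathfrak{l})$ is the quotient of the universal enveloping algebra $U(\mathfrak{l})$ by the ideal generated by $x^p-x^{[p]}-\xi(x)^p\cdot 1$ for all $x\in\mathfrak{l}$. *)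

theory Defs
  imports "HOL-Algebra.QuotRing" "HOL-Algebra.Ideal" "HOL-Computational_Algebra.Polynomial"
    "HOL-Library.Product_Plus" "HOL-Library.FuncSet"
begin

definition alg_closed :: "'k::field itself \<Rightarrow> bool" where
  "alg_closed _ \<longleftrightarrow> (\<forall>q :: 'k poly. degree q > 0 \<longrightarrow> (\<exists>x. poly q x = 0))"

definition prime_subfield :: "nat \<Rightarrow> 'k::field set" where
  "prime_subfield p = {of_nat i | i. i < p}"

definition lie_algebra :: "('k::field \<Rightarrow> 'l \<Rightarrow> 'l) \<Rightarrow> ('l::ab_group_add \<Rightarrow> 'l \<Rightarrow> 'l) \<Rightarrow> bool" where
  "lie_algebra sc br \<longleftrightarrow> vector_space sc
     \<and> (\<forall>x. Vector_Spaces.linear sc sc (br x))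
     \<and> (\<forall>y. Vector_Spaces.linear sc sc (\<lambda>x. br x y))
     \<and> (\<forall>x. br x x = 0)
     \<and> (\<forall>x y z. br x (br y z) + br y (br z x) + br z (br x y) = 0)"

text \<open>Jacobson's s_i(a,b): i * s_i(a,b) is the coefficient of t^(i-1) in ad(ta+b)^(p-1)(a).
  Expanding ad(ta+b)^(p-1) as a sum over words in {a,b} of length p-1 (True = a, False = b),
  this coefficient is the sum over words with exactly i-1 letters a.\<close>
definition lie_s :: "('k::field \<Rightarrow> 'l \<Rightarrow> 'l) \<Rightarrow> ('l::ab_group_add \<Rightarrow> 'l \<Rightarrow> 'l) \<Rightarrow> nat \<Rightarrow> nat \<Rightarrow> 'l \<Rightarrow> 'l \<Rightarrow> 'l" where
  "lie_s sc br p i a b = sc (inverse (of_nat i))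
     (\<Sum>\<sigma>\<in>{\<sigma>. length \<sigma> = p - 1 \<and> count_list \<sigma> True = i - 1}.
        foldr (\<lambda>t v. br (if t then a else b) v) \<sigma> a)"

definition restricted_lie_algebra ::
  "('k::field \<Rightarrow> 'l \<Rightarrow> 'l) \<Rightarrow> ('l::ab_group_add \<Rightarrow> 'l \<Rightarrow> 'l) \<Rightarrow> ('l \<Rightarrow> 'l) \<Rightarrow> nat \<Rightarrow> bool" where
  "restricted_lie_algebra sc br pm p \<longleftrightarrow> lie_algebra sc br
     \<and> (\<forall>c x. pm (sc c x) = sc (c ^ p) (pm x))
     \<and> (\<forall>x y. br (pm x) y = (br x ^^ p) y)
     \<and> (\<forall>a b. pm (a + b) = pm a + pm b + (\<Sum>i=1..p-1. lie_s sc br p i a b))"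

section \<open>The central extension l_chi = l + Kc\<close>

definition ext_scale :: "('k::field \<Rightarrow> 'l \<Rightarrow> 'l) \<Rightarrow> 'k \<Rightarrow> 'l \<times> 'k \<Rightarrow> 'l \<times> 'k" where
  "ext_scale sc c v = (sc c (fst v), c * snd v)"

definition ext_br :: "('l::ab_group_add \<Rightarrow> 'l \<Rightarrow> 'l) \<Rightarrow> 'l \<times> 'k::field \<Rightarrow> 'l \<times> 'k \<Rightarrow> 'l \<times> 'k" where
  "ext_br br v w = (br (fst v) (fst w), 0)"

definition ext_pmap :: "('l \<Rightarrow> 'l) \<Rightarrow> nat \<Rightarrow> ('l \<Rightarrow> 'k::field) \<Rightarrow> 'l \<times> 'k \<Rightarrow> 'l \<times> 'k" where
  "ext_pmap pm p \<chi> v = (pm (fst v), \<chi> (fst v) ^ p + snd v ^ p)"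

section \<open>Free associative algebra K<V> on the set V (the monoid algebra of words)\<close>

definition free_alg :: "('v list \<Rightarrow> 'k::field) ring" where
  "free_alg = \<lparr>carrier = {f. finite {w. f w \<noteq> 0}},
     monoid.mult = (\<lambda>f g w. \<Sum>i\<le>length w. f (take i w) * g (drop i w)),
     one = (\<lambda>w. if w = [] then 1 else 0),
     zero = (\<lambda>w. 0),
     add = (\<lambda>f g w. f w + g w)\<rparr>"

definition wd :: "'v list \<Rightarrow> 'v list \<Rightarrow> 'k::field" where
  "wd u = (\<lambda>w. if w = u then 1 else 0)"

text \<open>Relations turning K<V> into the tensor algebra T(V) and then into U(V):
  linearity of V -> T(V), and xy - yx - [x,y].\<close>
definition env_rels :: "('k::field \<Rightarrow> 'v \<Rightarrow> 'v) \<Rightarrow> ('v::ab_group_add \<Rightarrow> 'v \<Rightarrow> 'v) \<Rightarrow> ('v list \<Rightarrow> 'k) set" where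
  "env_rels sc br =
     {(\<lambda>w. wd [a + b] w - wd [a] w - wd [b] w) | a b. True}
   \<union> {(\<lambda>w. wd [sc c a] w - c * wd [a] w) | c a. True}
   \<union> {(\<lambda>w. wd [a, b] w - wd [b, a] w - wd [br a b] w) | a b. True}"

definition red_rels :: "('v \<Rightarrow> 'v) \<Rightarrow> nat \<Rightarrow> ('v \<Rightarrow> 'k::field) \<Rightarrow> ('v list \<Rightarrow> 'k) set" where
  "red_rels pm p \<xi> = {(\<lambda>w. wd (replicate p x) w - wd [pm x] w - (\<xi> x) ^ p * wd [] w) | x. True}"

definition red_ideal :: "('k::field \<Rightarrow> 'v \<Rightarrow> 'v) \<Rightarrow> ('v::ab_group_add \<Rightarrow> 'v \<Rightarrow> 'v) \<Rightarrow> ('v \<Rightarrow> 'v) \<Rightarrow> nat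
    \<Rightarrow> ('v \<Rightarrow> 'k) \<Rightarrow> ('v list \<Rightarrow> 'k) set" where
  "red_ideal sc br pm p \<xi> = genideal free_alg (env_rels sc br \<union> red_rels pm p \<xi>)"

text \<open>Reduced enveloping algebra U_xi(V) = U(V) / (x^p - x^[p] - xi(x)^p); for xi = 0 this is
  the restricted enveloping algebra u(V).\<close>
definition reduced_env :: "('k::field \<Rightarrow> 'v \<Rightarrow> 'v) \<Rightarrow> ('v::ab_group_add \<Rightarrow> 'v \<Rightarrow> 'v) \<Rightarrow> ('v \<Rightarrow> 'v) \<Rightarrow> nat
    \<Rightarrow> ('v \<Rightarrow> 'k) \<Rightarrow> ('v list \<Rightarrow> 'k) set ring" where
  "reduced_env sc br pm p \<xi> = free_alg Quot (red_ideal sc br pm p \<xi>)"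

definition env_scalar :: "('k::field \<Rightarrow> 'v \<Rightarrow> 'v) \<Rightarrow> ('v::ab_group_add \<Rightarrow> 'v \<Rightarrow> 'v) \<Rightarrow> ('v \<Rightarrow> 'v) \<Rightarrow> nat
    \<Rightarrow> ('v \<Rightarrow> 'k) \<Rightarrow> 'k \<Rightarrow> ('v list \<Rightarrow> 'k) set" where
  "env_scalar sc br pm p \<xi> c = red_ideal sc br pm p \<xi> +>\<^bsub>free_alg\<^esub> (\<lambda>w. c * wd [] w)"

section \<open>Finite direct sums (= direct products) of rings, and algebra isomorphisms\<close>

definition ring_prod :: "'i set \<Rightarrow> ('i \<Rightarrow> ('a, 'm) ring_scheme) \<Rightarrow> ('i \<Rightarrow> 'a) ring" where
  "ring_prod I R = \<lparr>carrier = PiE I (\<lambda>i. carrier (R i)),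
     monoid.mult = (\<lambda>f g. \<lambda>i\<in>I. f i \<otimes>\<^bsub>R i\<^esub> g i),
     one = (\<lambda>i\<in>I. \<one>\<^bsub>R i\<^esub>),
     zero = (\<lambda>i\<in>I. \<zero>\<^bsub>R i\<^esub>),
     add = (\<lambda>f g. \<lambda>i\<in>I. f i \<oplus>\<^bsub>R i\<^esub> g i)\<rparr>"

text \<open>Isomorphism of unital K-algebras A, B with structure maps eA, eB : K -> A, B:
  a ring isomorphism compatible with the structure maps (hence K-linear).\<close>
definition alg_iso :: "('a, 'm) ring_scheme \<Rightarrow> ('b, 'n) ring_scheme \<Rightarrow> ('k \<Rightarrow> 'a) \<Rightarrow> ('k \<Rightarrow> 'b) \<Rightarrow> bool" where
  "alg_iso A B eA eB \<longleftrightarrow> (\<exists>\<phi>. \<phi> \<in> ring_iso A B \<and> (\<forall>c. \<phi> (eA c) = eB c))"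

end

theory Submission
  imports Defs "HOL-Computational_Algebra.Primes" "HOL-Number_Theory.Cong"
    "HOL-Library.Function_Algebras"
begin

(* In u(l_chi) the letter c = (0, 1) is central, because [x, 0] = 0, and c^p = c, because its
   p-map is (0^[p], chi(0)^p + 1) = (0, 1). Evaluating the Lagrange basis of the prime field F
   at c gives elements idempotent i that are central modulo the defining ideal, sum to 1 and
   satisfy idempotent i * (c - i) = 0 modulo that ideal.
   The substitution specialize i : (x, a) |-> x + a i maps u(l_chi) onto U_{i chi}(l) (using
   i^p = i), and embed : x |-> (x, 0) is a section of it after multiplying by idempotent i:
   modulo the ideal of u(l_chi), idempotent i * f = idempotent i * embed (specialize i f), and
   idempotent i * embed g = 0 for g in the ideal of U_{i chi}(l). Hence
   f = sum_i idempotent i * embed (specialize i f) lies in the ideal once every specialize i f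
   vanishes, and sum_i idempotent i * embed (g i) is a common preimage of any family g. So the
   product of the specialisations is a surjective ring map with kernel the ideal of u(l_chi),
   and the homomorphism theorem gives the isomorphism. *)

section \<open>The free algebra\<close>

(* Coefficient functions are treated as elements of the free algebra: pointwise evaluation is
   requested explicitly via fun_apply_simps, as these rules make the simplifier eta-expand
   sums and zeros in induction goals. *)
declare zero_fun_apply [simp del] plus_fun_apply [simp del]
  minus_apply [simp del] uminus_apply [simp del]

definition wmult :: "('v list \<Rightarrow> 'k::field) \<Rightarrow> ('v list \<Rightarrow> 'k) \<Rightarrow> 'v list \<Rightarrow> 'k"  (infixl "\<star>" 70)
  where "f \<star> g = (\<lambda>w. \<Sum>i\<le>length w. f (take i w) * g (drop i w))"

definition wscale :: "'k::field \<Rightarrow> ('v list \<Rightarrow> 'k) \<Rightarrow> 'v list \<Rightarrow> 'k"  (infixr "*\<^sub>w" 75)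
  where "c *\<^sub>w f = (\<lambda>w. c * f w)"

lemma wscale_apply: "(c *\<^sub>w f) w = c * f w"
  by (simp add: wscale_def)

lemma sum_fun_apply: "(\<Sum>i\<in>A. F i) x = (\<Sum>i\<in>A. F i x)"
  by (induction A rule: infinite_finite_induct) (simp_all add: zero_fun_apply plus_fun_apply)

lemmas fun_apply_simps = zero_fun_apply plus_fun_apply minus_apply uminus_apply wscale_apply
  sum_fun_apply

lemma wscale_zero_left [simp]: "0 *\<^sub>w f = 0"
  and wscale_one [simp]: "1 *\<^sub>w f = f"
  by (simp_all add: fun_eq_iff fun_apply_simps)

lemma wd_apply: "wd u w = (if w = u then 1 else 0)"
  by (simp add: wd_def)

lemma free_alg_simps:
  "monoid.mult free_alg = (\<star>)" "add free_alg = (+)" "one free_alg = wd []" "zero free_alg = 0"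
  by (auto simp: free_alg_def wmult_def wd_def fun_eq_iff fun_apply_simps)

lemma mem_carrier_free_alg: "f \<in> carrier free_alg \<longleftrightarrow> finite {w. f w \<noteq> 0}"
  by (simp add: free_alg_def)

lemma wmult_Nil [simp]: "(f \<star> g) [] = f [] * g []"
  by (simp add: wmult_def)

lemma wmult_Cons: "(f \<star> g) (x # w) = f [] * g (x # w) + ((\<lambda>u. f (x # u)) \<star> g) w"
  unfolding wmult_def by (simp add: sum.atMost_Suc_shift del: sum.atMost_Suc)

lemma wmult_add_left: "(f + g) \<star> h = f \<star> h + g \<star> h"
  and wmult_add_right: "h \<star> (f + g) = h \<star> f + h \<star> g"
  and wmult_diff_left: "(f - g) \<star> h = f \<star> h - g \<star> h"
  and wmult_diff_right: "h \<star> (f - g) = h \<star> f - h \<star> g"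
  and wmult_wscale_left: "(c *\<^sub>w f) \<star> h = c *\<^sub>w (f \<star> h)"
  and wmult_wscale_right: "h \<star> (c *\<^sub>w f) = c *\<^sub>w (h \<star> f)"
  and wmult_sum_left: "(\<Sum>i\<in>A. F i) \<star> h = (\<Sum>i\<in>A. F i \<star> h)"
  and wmult_sum_right: "h \<star> (\<Sum>i\<in>A. F i) = (\<Sum>i\<in>A. h \<star> F i)"
  and wmult_zero_left [simp]: "0 \<star> h = 0"
  and wmult_zero_right [simp]: "h \<star> 0 = 0"
  by (simp_all add: wmult_def fun_eq_iff fun_apply_simps algebra_simps sum.distrib sum_subtractf
      sum_distrib_left sum_distrib_right sum.swap[of _ A])

lemmas wmult_bilinear = wmult_add_left wmult_add_right wmult_diff_left wmult_diff_right
  wmult_wscale_left wmult_wscale_right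

lemma wmult_assoc: "(f \<star> g) \<star> h = f \<star> (g \<star> h)"
proof
  fix w show "((f \<star> g) \<star> h) w = (f \<star> (g \<star> h)) w"
  proof (induction w arbitrary: f)
    case (Cons x w)
    have tail: "(\<lambda>u. (f \<star> g) (x # u)) = f [] *\<^sub>w (\<lambda>u. g (x # u)) + (\<lambda>u. f (x # u)) \<star> g"
      by (simp add: fun_eq_iff fun_apply_simps wmult_Cons)
    show ?case
      by (simp add: wmult_Cons[of "f \<star> g"] wmult_Cons[of f "g \<star> h"] wmult_Cons[of g h]
          tail wmult_bilinear Cons.IH fun_apply_simps algebra_simps)
  qed simp
qed

lemma wd_self [simp]: "wd u u = 1"
  and wd_Cons_Nil [simp]: "wd (a # u) [] = 0"
  and wd_Cons_Cons: "wd (a # u) (x # w) = (if x = a then wd u w else 0)"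
  by (simp_all add: wd_apply)

lemma wd_Cons_shift: "(\<lambda>s. wd (a # u) (x # s)) = (if x = a then wd u else 0)"
  and wd_Nil_shift: "(\<lambda>s. wd [] (x # s)) = 0"
  by (auto simp: fun_eq_iff fun_apply_simps wd_apply)

lemma wd_Nil_wmult [simp]: "wd [] \<star> f = f"
proof
  fix w show "(wd [] \<star> f) w = f w"
    by (cases w) (simp_all add: wmult_Cons wd_Nil_shift zero_fun_apply)
qed

lemma wmult_wd_Nil [simp]: "f \<star> wd [] = f"
proof
  fix w show "(f \<star> wd []) w = f w"
    by (induction w arbitrary: f) (simp_all add: wmult_Cons wd_apply)
qed

lemma wd_wmult_wd: "wd u \<star> wd v = wd (u @ v)"
proof
  fix w show "(wd u \<star> wd v) w = wd (u @ v) w"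
  proof (induction u arbitrary: w)
    case (Cons a u)
    have step: "(wd (a # u) \<star> wd v) (x # s) = (if x = a then (wd u \<star> wd v) s else 0)" for x s
      by (simp add: wmult_Cons wd_Cons_shift zero_fun_apply)
    show ?case
      by (cases w) (simp_all add: step Cons.IH wd_Cons_Cons)
  qed simp
qed

lemma wscale_eq_wmult: "c *\<^sub>w f = (c *\<^sub>w wd []) \<star> f"
  by (simp add: wmult_wscale_left)

lemma wmult_support:
  "{w. (f \<star> g) w \<noteq> 0} \<subseteq> (\<lambda>(u, v). u @ v) ` ({w. f w \<noteq> 0} \<times> {w. g w \<noteq> 0})"
proof
  fix w assume "w \<in> {w. (f \<star> g) w \<noteq> 0}"
  then obtain i where "f (take i w) * g (drop i w) \<noteq> 0"
    unfolding wmult_def by (auto elim: sum.not_neutral_contains_not_neutral)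
  then show "w \<in> (\<lambda>(u, v). u @ v) ` ({w. f w \<noteq> 0} \<times> {w. g w \<noteq> 0})"
    by (intro image_eqI[of _ _ "(take i w, drop i w)"]) auto
qed

context
  fixes f g :: "'v list \<Rightarrow> 'k::field"
  assumes f: "f \<in> carrier free_alg"
begin

lemma wscale_closed [simp, intro]: "c *\<^sub>w f \<in> carrier free_alg"
  and fa_uminus_closed [simp, intro]: "- f \<in> carrier free_alg"
  using f unfolding mem_carrier_free_alg
  by (auto intro: finite_subset[of _ "{w. f w \<noteq> 0}"] simp: fun_apply_simps)

context
  assumes g: "g \<in> carrier free_alg"
begin

lemma wmult_closed [simp, intro]: "f \<star> g \<in> carrier free_alg"
  using f g unfolding mem_carrier_free_alg by (auto intro: finite_subset[OF wmult_support])

lemma fa_add_closed [simp, intro]: "f + g \<in> carrier free_alg"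
  and fa_diff_closed [simp, intro]: "f - g \<in> carrier free_alg"
  using f g unfolding mem_carrier_free_alg
  by (auto intro: finite_subset[of _ "{w. f w \<noteq> 0} \<union> {w. g w \<noteq> 0}"] simp: fun_apply_simps)

end

end

lemma fa_zero_closed [simp, intro]: "0 \<in> carrier free_alg"
  and wd_closed [simp, intro]: "wd u \<in> carrier free_alg"
  unfolding mem_carrier_free_alg
  by (auto intro: finite_subset[of _ "{u}"] simp: wd_apply zero_fun_apply)

lemma diff_eq_add_wscale: "f - g = f + (-1) *\<^sub>w g"
  by (simp add: fun_eq_iff fun_apply_simps)

lemma fa_sum_closed [intro]:
  "(\<And>i. i \<in> A \<Longrightarrow> F i \<in> carrier free_alg) \<Longrightarrow> (\<Sum>i\<in>A. F i) \<in> carrier free_alg"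
  by (induction A rule: infinite_finite_induct) auto

lemma free_alg_basis_expansion:
  assumes "f \<in> carrier free_alg"
  shows "f = (\<Sum>w | f w \<noteq> 0. f w *\<^sub>w wd w)"
proof
  fix u
  have "(\<Sum>w | f w \<noteq> 0. f w * wd w u) = (\<Sum>w | f w \<noteq> 0. if w = u then f w else 0)"
    by (rule sum.cong) (auto simp: wd_apply)
  also have "\<dots> = f u"
    using assms by (simp add: mem_carrier_free_alg sum.delta)
  finally show "f u = (\<Sum>w | f w \<noteq> 0. f w *\<^sub>w wd w) u"
    by (simp add: fun_apply_simps)
qed

lemma free_alg_induct [consumes 1, case_names zero add wscale wd]:
  assumes "f \<in> carrier free_alg"
    and "P 0"
    and "\<And>g h. g \<in> carrier free_alg \<Longrightarrow> h \<in> carrier free_alg \<Longrightarrow> P g \<Longrightarrow> P h \<Longrightarrow> P (g + h)"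
    and "\<And>c g. g \<in> carrier free_alg \<Longrightarrow> P g \<Longrightarrow> P (c *\<^sub>w g)"
    and "\<And>w. P (wd w)"
  shows "P f"
proof -
  have "finite A \<Longrightarrow> P (\<Sum>w\<in>A. f w *\<^sub>w wd w)" for A
  proof (induction A rule: finite_induct)
    case (insert x A)
    have "P (f x *\<^sub>w wd x + (\<Sum>w\<in>A. f w *\<^sub>w wd w))"
      by (rule assms(3)) (auto intro: assms(4,5) insert.IH)
    then show ?case
      unfolding sum.insert[OF insert.hyps] .
  qed (simp only: sum.empty assms(2))
  then show ?thesis
    using assms(1) free_alg_basis_expansion[OF assms(1)] by (metis mem_carrier_free_alg)
qed

lemma ring_free_alg: "ring (free_alg :: ('v list \<Rightarrow> 'k::field) ring)"
proof (rule ringI)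
  show "abelian_group (free_alg :: ('v list \<Rightarrow> 'k) ring)"
  proof (rule abelian_groupI, unfold free_alg_simps)
    fix x :: "'v list \<Rightarrow> 'k" assume "x \<in> carrier free_alg"
    then show "\<exists>y\<in>carrier free_alg. y + x = 0"
      by (intro bexI[of _ "(-1) *\<^sub>w x"]) (auto simp: fun_eq_iff fun_apply_simps)
  qed (auto simp: algebra_simps)
  show "monoid (free_alg :: ('v list \<Rightarrow> 'k) ring)"
    by (rule monoidI, unfold free_alg_simps) (auto simp: wmult_assoc)
qed (auto simp: free_alg_simps wmult_add_left wmult_add_right)

lemma a_minus_free_alg:
  assumes "f \<in> carrier free_alg" and "g \<in> carrier free_alg"
  shows "f \<ominus>\<^bsub>free_alg\<^esub> g = f - g"
proof -
  have "\<ominus>\<^bsub>free_alg\<^esub> g = - g"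
    by (rule abelian_group.minus_equality[OF ring.is_abelian_group[OF ring_free_alg]])
      (use assms(2) in \<open>auto simp: free_alg_simps fun_eq_iff fun_apply_simps\<close>)
  then show ?thesis
    by (simp add: a_minus_def free_alg_simps)
qed


context
  fixes J :: "('v list \<Rightarrow> 'k::field) set"
  assumes J: "ideal J free_alg"
begin

lemma fa_ideal_carrier: "f \<in> J \<Longrightarrow> f \<in> carrier free_alg"
  using J by (meson additive_subgroup.a_Hcarr ideal.axioms(1))

lemma fa_ideal_zero: "0 \<in> J"
  using additive_subgroup.zero_closed[OF ideal.axioms(1)[OF J]] by (simp add: free_alg_simps)

lemma fa_ideal_add: "f \<in> J \<Longrightarrow> g \<in> J \<Longrightarrow> f + g \<in> J"
  using additive_subgroup.a_closed[OF ideal.axioms(1)[OF J]] by (simp add: free_alg_simps)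

lemma fa_ideal_wmult_left: "x \<in> carrier free_alg \<Longrightarrow> f \<in> J \<Longrightarrow> x \<star> f \<in> J"
  using ideal.I_l_closed[OF J] by (simp add: free_alg_simps)

lemma fa_ideal_wmult_right: "x \<in> carrier free_alg \<Longrightarrow> f \<in> J \<Longrightarrow> f \<star> x \<in> J"
  using ideal.I_r_closed[OF J] by (simp add: free_alg_simps)

lemma fa_ideal_wscale: "f \<in> J \<Longrightarrow> c *\<^sub>w f \<in> J"
  by (subst wscale_eq_wmult) (simp add: fa_ideal_wmult_left)

lemma fa_ideal_diff: "f \<in> J \<Longrightarrow> g \<in> J \<Longrightarrow> f - g \<in> J"
  unfolding diff_eq_add_wscale by (simp add: fa_ideal_add fa_ideal_wscale)

lemma fa_ideal_sum: "(\<And>i. i \<in> A \<Longrightarrow> F i \<in> J) \<Longrightarrow> (\<Sum>i\<in>A. F i) \<in> J"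
  by (induction A rule: infinite_finite_induct) (simp_all add: fa_ideal_zero fa_ideal_add)

lemmas fa_ideal_closed = fa_ideal_zero fa_ideal_add fa_ideal_diff fa_ideal_wscale
  fa_ideal_wmult_left fa_ideal_wmult_right fa_ideal_sum

lemma fa_rcos_eq_iff:
  assumes "f \<in> carrier free_alg" and "g \<in> carrier free_alg"
  shows "J +>\<^bsub>free_alg\<^esub> f = J +>\<^bsub>free_alg\<^esub> g \<longleftrightarrow> f - g \<in> J"
proof -
  interpret ideal J free_alg by (rule J)
  have mem_iff: "x \<in> J +>\<^bsub>free_alg\<^esub> y \<longleftrightarrow> x - y \<in> J"
    if "x \<in> carrier free_alg" "y \<in> carrier free_alg" for x y
    using a_rcos_module_minus[OF ring_free_alg that(2,1)] that by (simp add: a_minus_free_alg)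
  show ?thesis
  proof
    assume "J +>\<^bsub>free_alg\<^esub> f = J +>\<^bsub>free_alg\<^esub> g"
    then show "f - g \<in> J"
      using a_rcos_self[of f] mem_iff assms by simp
  next
    assume "f - g \<in> J"
    then show "J +>\<^bsub>free_alg\<^esub> f = J +>\<^bsub>free_alg\<^esub> g"
      using a_repr_independence'[of f g] mem_iff assms by simp
  qed
qed

lemma fa_rcos_eq_ideal_iff:
  assumes "f \<in> carrier free_alg"
  shows "J +>\<^bsub>free_alg\<^esub> f = J \<longleftrightarrow> f \<in> J"
proof -
  interpret ideal J free_alg by (rule J)
  have "J = J +>\<^bsub>free_alg\<^esub> 0"
    using a_rcos_const[OF fa_ideal_zero] by simp
  then show ?thesis
    using fa_rcos_eq_iff[OF assms, of 0] by simp
qed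

lemma carrier_free_alg_Quot:
  "X \<in> carrier (free_alg Quot J) \<longleftrightarrow> (\<exists>f\<in>carrier free_alg. X = J +>\<^bsub>free_alg\<^esub> f)"
  by (auto simp: FactRing_def A_RCOSETS_def')

end


section \<open>Substitution homomorphisms\<close>

definition wprod :: "('v \<Rightarrow> 'u list \<Rightarrow> 'k::field) \<Rightarrow> 'v list \<Rightarrow> 'u list \<Rightarrow> 'k"
  where "wprod g w = foldr (\<lambda>v acc. g v \<star> acc) w (wd [])"

definition wsubst :: "('v \<Rightarrow> 'u list \<Rightarrow> 'k::field) \<Rightarrow> ('v list \<Rightarrow> 'k) \<Rightarrow> 'u list \<Rightarrow> 'k"
  where "wsubst g f = (\<Sum>w | f w \<noteq> 0. f w *\<^sub>w wprod g w)"

lemma wprod_Nil [simp]: "wprod g [] = wd []"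
  and wprod_Cons: "wprod g (v # w) = g v \<star> wprod g w"
  by (simp_all add: wprod_def)

lemma wprod_append: "wprod g (u @ v) = wprod g u \<star> wprod g v"
  by (induction u) (simp_all add: wprod_Cons wmult_assoc)

lemma wprod_closed [simp, intro]: "(\<And>v. g v \<in> carrier free_alg) \<Longrightarrow> wprod g w \<in> carrier free_alg"
  by (induction w) (auto simp: wprod_Cons)

lemma wsubst_eq:
  "finite A \<Longrightarrow> {w. f w \<noteq> 0} \<subseteq> A \<Longrightarrow> wsubst g f = (\<Sum>w\<in>A. f w *\<^sub>w wprod g w)"
  unfolding wsubst_def by (rule sum.mono_neutral_left) (auto simp: fun_eq_iff fun_apply_simps)

lemma wsubst_closed [simp, intro]: "(\<And>v. g v \<in> carrier free_alg) \<Longrightarrow> wsubst g f \<in> carrier free_alg"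
  unfolding wsubst_def by (intro fa_sum_closed wscale_closed wprod_closed)

lemma wsubst_add:
  assumes "f \<in> carrier free_alg" and "h \<in> carrier free_alg"
  shows "wsubst g (f + h) = wsubst g f + wsubst g h"
proof -
  let ?A = "{w. f w \<noteq> 0} \<union> {w. h w \<noteq> 0}"
  have "finite ?A"
    using assms by (simp add: mem_carrier_free_alg)
  then show ?thesis
    by (subst (1 2 3) wsubst_eq[of ?A])
      (auto simp: fun_eq_iff fun_apply_simps distrib_right sum.distrib)
qed

lemma wsubst_wscale:
  assumes "f \<in> carrier free_alg"
  shows "wsubst g (c *\<^sub>w f) = c *\<^sub>w wsubst g f"
proof -
  have "finite {w. f w \<noteq> 0}"
    using assms by (simp add: mem_carrier_free_alg)
  then show ?thesis
    by (subst (1 2) wsubst_eq[of "{w. f w \<noteq> 0}"])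
      (auto simp: fun_eq_iff fun_apply_simps sum_distrib_left mult.assoc)
qed

lemma wsubst_diff:
  assumes "f \<in> carrier free_alg" and "h \<in> carrier free_alg"
  shows "wsubst g (f - h) = wsubst g f - wsubst g h"
  using assms unfolding diff_eq_add_wscale by (simp add: wsubst_add wsubst_wscale)

lemma wsubst_zero [simp]: "wsubst g 0 = 0"
  by (simp add: wsubst_def zero_fun_apply)

lemma wsubst_wd [simp]: "wsubst g (wd u) = wprod g u"
proof -
  have "wsubst g (wd u) = (\<Sum>w\<in>{u}. wd u w *\<^sub>w wprod g w)"
    by (rule wsubst_eq) (auto simp: wd_apply)
  then show ?thesis
    by (simp add: fun_eq_iff fun_apply_simps)
qed

lemma wprod_single [simp]: "wprod g [v] = g v"
  by (simp add: wprod_Cons)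

lemma wsubst_sum:
  "(\<And>i. i \<in> A \<Longrightarrow> F i \<in> carrier free_alg) \<Longrightarrow> wsubst g (\<Sum>i\<in>A. F i) = (\<Sum>i\<in>A. wsubst g (F i))"
  by (induction A rule: infinite_finite_induct) (simp_all add: wsubst_add fa_sum_closed)

lemma wsubst_wd_wmult:
  assumes "h \<in> carrier free_alg"
  shows "wsubst g (wd u \<star> h) = wprod g u \<star> wsubst g h"
  using assms
proof (induction h rule: free_alg_induct)
  case (add a b)
  then show ?case
    by (simp add: wmult_add_left wmult_add_right wsubst_add)
next
  case (wscale c a)
  then show ?case
    by (simp add: wmult_wscale_right wsubst_wscale)
qed (simp_all add: wd_wmult_wd wprod_append)

lemma wsubst_wmult:
  assumes "f \<in> carrier free_alg" and "h \<in> carrier free_alg"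
  shows "wsubst g (f \<star> h) = wsubst g f \<star> wsubst g h"
  using assms(1)
proof (induction f rule: free_alg_induct)
  case (add a b)
  then show ?case
    using assms(2) by (simp add: wmult_add_left wsubst_add)
next
  case (wscale c a)
  then show ?case
    using assms(2) by (simp add: wmult_wscale_left wsubst_wscale)
qed (simp_all add: wsubst_wd_wmult assms(2))

lemma ring_hom_wsubst:
  "(\<And>v. g v \<in> carrier free_alg) \<Longrightarrow> ring_hom_ring free_alg free_alg (wsubst g)"
  by (intro ring_hom_ringI2 ring_free_alg ring_hom_memI)
    (auto simp: free_alg_simps wsubst_wmult wsubst_add)


definition wpow :: "('v list \<Rightarrow> 'k::field) \<Rightarrow> nat \<Rightarrow> 'v list \<Rightarrow> 'k"
  where "wpow X n = ((\<star>) X ^^ n) (wd [])"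

lemma wpow_0 [simp]: "wpow X 0 = wd []"
  and wpow_Suc: "wpow X (Suc n) = X \<star> wpow X n"
  by (simp_all add: wpow_def)

lemma wpow_closed [simp, intro]: "X \<in> carrier free_alg \<Longrightarrow> wpow X n \<in> carrier free_alg"
  by (induction n) (auto simp: wpow_Suc)

lemma wpow_letter: "wpow (wd [v]) n = wd (replicate n v)"
  by (induction n) (simp_all add: wpow_Suc wd_wmult_wd)

lemma wprod_replicate: "wprod g (replicate n v) = wpow (g v) n"
  by (induction n) (simp_all add: wprod_Cons wpow_Suc)

definition weval :: "('v list \<Rightarrow> 'k::field) \<Rightarrow> 'k poly \<Rightarrow> 'v list \<Rightarrow> 'k"
  where "weval X P = (\<Sum>n\<le>degree P. coeff P n *\<^sub>w wpow X n)"

lemma weval_eq: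
  assumes "finite A" and "{n. coeff P n \<noteq> 0} \<subseteq> A"
  shows "weval X P = (\<Sum>n\<in>A. coeff P n *\<^sub>w wpow X n)"
proof -
  have "(\<Sum>n\<le>degree P. coeff P n *\<^sub>w wpow X n) = (\<Sum>n\<in>{..degree P} \<union> A. coeff P n *\<^sub>w wpow X n)"
    using assms(1)
    by (intro sum.mono_neutral_left) (auto simp: fun_eq_iff fun_apply_simps coeff_eq_0)
  also have "\<dots> = (\<Sum>n\<in>A. coeff P n *\<^sub>w wpow X n)"
    using assms by (intro sum.mono_neutral_right) (auto simp: fun_eq_iff fun_apply_simps)
  finally show ?thesis
    by (simp add: weval_def)
qed

lemma weval_closed [simp, intro]: "X \<in> carrier free_alg \<Longrightarrow> weval X P \<in> carrier free_alg"
  unfolding weval_def by (intro fa_sum_closed wscale_closed wpow_closed)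

lemma weval_0 [simp]: "weval X 0 = 0"
  by (simp add: weval_def fun_eq_iff fun_apply_simps)

lemma finite_coeff_support: "finite {n. coeff P n \<noteq> 0}"
  by (rule finite_subset[of _ "{..degree P}"]) (auto intro: le_degree)

lemma weval_add: "weval X (P + Q) = weval X P + weval X Q"
proof -
  let ?A = "{n. coeff P n \<noteq> 0} \<union> {n. coeff Q n \<noteq> 0}"
  show ?thesis
    by (subst (1 2 3) weval_eq[of ?A])
      (auto simp: finite_coeff_support fun_eq_iff fun_apply_simps distrib_right sum.distrib)
qed

lemma weval_smult: "weval X (smult a P) = a *\<^sub>w weval X P"
  by (subst (1 2) weval_eq[of "{..degree P}"])
    (auto intro: le_degree simp: fun_eq_iff fun_apply_simps sum_distrib_left mult.assoc)

lemma weval_pCons: "weval X (pCons a P) = a *\<^sub>w wd [] + X \<star> weval X P"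
proof -
  have "weval X (pCons a P) = (\<Sum>n\<le>Suc (degree P). coeff (pCons a P) n *\<^sub>w wpow X n)"
    by (rule weval_eq) (auto simp: coeff_pCons' split: if_splits dest!: le_degree)
  also have "\<dots> = a *\<^sub>w wd [] + (\<Sum>n\<le>degree P. coeff P n *\<^sub>w wpow X (Suc n))"
    by (simp add: sum.atMost_Suc_shift del: sum.atMost_Suc)
  also have "\<dots> = a *\<^sub>w wd [] + X \<star> weval X P"
    by (simp add: weval_def wmult_sum_right wmult_wscale_right wpow_Suc)
  finally show ?thesis .
qed

lemma weval_mult: "weval X (P * Q) = weval X P \<star> weval X Q"
  by (induction P) (simp_all add: weval_add weval_smult weval_pCons wmult_add_left
      wmult_wscale_left wmult_assoc)

lemma weval_const: "weval X [:a:] = a *\<^sub>w wd []"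
  by (simp add: weval_pCons)

lemma weval_1 [simp]: "weval X 1 = wd []"
  by (simp add: one_pCons weval_const fun_eq_iff fun_apply_simps)

lemma weval_monom1: "weval X [:0, 1:] = X"
  by (simp add: weval_pCons weval_const fun_eq_iff fun_apply_simps)

lemma weval_diff: "weval X (P - Q) = weval X P - weval X Q"
proof -
  have "weval X (P + smult (-1) Q) = weval X P + (-1) *\<^sub>w weval X Q"
    by (simp only: weval_add weval_smult)
  then show ?thesis
    by (simp add: diff_eq_add_wscale)
qed

lemma weval_power: "weval X (P ^ n) = wpow (weval X P) n"
  by (induction n) (simp_all add: weval_mult wpow_Suc)

lemma weval_sum: "weval X (\<Sum>i\<in>A. P i) = (\<Sum>i\<in>A. weval X (P i))"
  by (induction A rule: infinite_finite_induct) (simp_all add: weval_add)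

lemma wsubst_weval:
  assumes "\<And>v. g v \<in> carrier free_alg" and "X \<in> carrier free_alg"
  shows "wsubst g (weval X P) = weval (wsubst g X) P"
  by (induction P) (use assms in \<open>simp_all add: weval_pCons wsubst_add wsubst_wscale wsubst_wmult\<close>)

lemma wpow_add_wscale_CHAR:
  fixes X :: "'v list \<Rightarrow> 'k::field"
  assumes "prime CHAR('k)"
  shows "wpow (X + c *\<^sub>w wd []) CHAR('k) = wpow X CHAR('k) + c ^ CHAR('k) *\<^sub>w wd []"
proof -
  have "[:c, 1:] ^ CHAR('k) = ([:c:] + [:0, 1:]) ^ CHAR('k)"
    by simp
  also have "\<dots> = [:c:] ^ CHAR('k) + [:0, 1:] ^ CHAR('k)"
    by (rule freshmans_dream) (simp_all add: assms)
  also have "\<dots> = [:c ^ CHAR('k):] + [:0, 1:] ^ CHAR('k)"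
    by (simp add: poly_const_pow)
  finally have "weval X ([:c, 1:] ^ CHAR('k)) = weval X ([:c ^ CHAR('k):] + [:0, 1:] ^ CHAR('k))"
    by (rule arg_cong)
  moreover have "weval X [:c, 1:] = X + c *\<^sub>w wd []"
    by (simp add: weval_pCons weval_const fun_eq_iff fun_apply_simps)
  ultimately show ?thesis
    by (simp add: weval_power weval_add weval_const weval_monom1 add.commute)
qed


section \<open>The prime subfield and Lagrange interpolation\<close>

lemma of_nat_power_CHAR:
  assumes "prime CHAR('k::comm_semiring_1)"
  shows "(of_nat n :: 'k) ^ CHAR('k) = of_nat n"
proof (induction n)
  case (Suc n)
  have "(of_nat (Suc n) :: 'k) ^ CHAR('k) = (1 + of_nat n) ^ CHAR('k)"
    by simp
  also have "\<dots> = 1 + of_nat n"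
    using assms Suc.IH by (simp add: freshmans_dream)
  finally show ?case
    by simp
qed (use prime_gt_0_nat[OF assms] in \<open>simp add: power_0_left\<close>)

lemma prime_subfield_power_CHAR:
  assumes "prime CHAR('k::field)" and "x \<in> prime_subfield CHAR('k)"
  shows "x ^ CHAR('k) = (x :: 'k)"
  using assms by (auto simp: prime_subfield_def of_nat_power_CHAR)

lemma finite_prime_subfield: "finite (prime_subfield p)"
  unfolding prime_subfield_def by simp

lemma card_prime_subfield: "card (prime_subfield CHAR('k) :: 'k::field set) = CHAR('k)"
proof -
  have "inj_on (of_nat :: nat \<Rightarrow> 'k) {..<CHAR('k)}"
    by (rule inj_onI) (simp add: of_nat_eq_iff_cong_CHAR cong_def)
  moreover have "(prime_subfield CHAR('k) :: 'k set) = of_nat ` {..<CHAR('k)}"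
    by (auto simp: prime_subfield_def)
  ultimately show ?thesis
    by (simp add: card_image)
qed

definition lagrange_basis :: "'k::field set \<Rightarrow> 'k \<Rightarrow> 'k poly"
  where "lagrange_basis A i = smult (inverse (\<Prod>j\<in>A - {i}. i - j)) (\<Prod>j\<in>A - {i}. [:- j, 1:])"

context
  fixes A :: "'k::field set"
  assumes A: "finite A"
begin

lemma poly_lagrange_basis:
  assumes "i \<in> A" and "j \<in> A"
  shows "poly (lagrange_basis A i) j = (if j = i then 1 else 0)"
proof (cases "j = i")
  case True
  have "(\<Prod>k\<in>A - {i}. i - k) \<noteq> 0"
    using A by (simp add: prod_zero_iff)
  with True show ?thesis
    by (simp add: lagrange_basis_def poly_prod)
next
  case False
  then have "(\<Prod>k\<in>A - {i}. poly [:- k, 1:] j) = 0"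
    using A assms(2) by (simp add: prod_zero_iff)
  with False show ?thesis
    by (simp add: lagrange_basis_def poly_prod)
qed

lemma degree_lagrange_basis:
  assumes "i \<in> A"
  shows "degree (lagrange_basis A i) \<le> card A - 1"
proof -
  have "degree (\<Prod>j\<in>A - {i}. [:- j, 1:]) \<le> (\<Sum>j\<in>A - {i}. degree [:- j, 1:])"
    using A degree_prod_sum_le[of "A - {i}" "\<lambda>j. [:- j, 1:]"] by (simp add: o_def)
  also have "\<dots> = card A - 1"
    using A assms by simp
  finally show ?thesis
    by (simp add: lagrange_basis_def)
qed

lemma sum_lagrange_basis:
  assumes "A \<noteq> {}"
  shows "(\<Sum>i\<in>A. lagrange_basis A i) = 1"
proof (rule poly_eqI_degree[where A = A])
  fix x assume "x \<in> A"
  then show "poly (\<Sum>i\<in>A. lagrange_basis A i) x = poly 1 x"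
    using A by (simp add: poly_sum poly_lagrange_basis cong: sum.cong)
next
  have "card A > 0"
    using A assms by (simp add: card_gt_0_iff)
  moreover have "degree (\<Sum>i\<in>A. lagrange_basis A i) \<le> card A - 1"
    by (intro degree_sum_le A degree_lagrange_basis)
  ultimately show "degree (\<Sum>i\<in>A. lagrange_basis A i) < card A" "degree (1 :: 'k poly) < card A"
    by simp_all
qed

lemma lagrange_basis_mult_linear:
  assumes "i \<in> A"
  shows "lagrange_basis A i * [:- i, 1:] = smult (inverse (\<Prod>j\<in>A - {i}. i - j)) (\<Prod>j\<in>A. [:- j, 1:])"
  using A assms by (simp add: lagrange_basis_def prod.remove mult.commute)

end

lemma prod_prime_subfield_linear:
  assumes "prime CHAR('k::field)"
  shows "(\<Prod>j\<in>prime_subfield CHAR('k). [:- j, 1:]) = [:0, 1:] ^ CHAR('k) - [:0, 1 :: 'k:]"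
    (is "?Z = _")
proof (rule poly_eqI_degree_lead_coeff[where n = "CHAR('k)" and A = "prime_subfield CHAR('k)"])
  have deg: "degree ?Z = CHAR('k)"
    by (simp add: degree_prod_eq_sum_degree finite_prime_subfield card_prime_subfield)
  moreover have "coeff ?Z (degree ?Z) = 1"
    by (simp add: lead_coeff_prod)
  moreover have "CHAR('k) \<ge> 2"
    using assms prime_ge_2_nat by blast
  ultimately show "coeff ?Z CHAR('k) = coeff ([:0, 1:] ^ CHAR('k) - [:0, 1:]) CHAR('k)"
    and "degree ?Z \<le> CHAR('k)"
    and "degree ([:0, 1:] ^ CHAR('k) - [:0, 1 :: 'k:]) \<le> CHAR('k)"
    by (simp_all add: coeff_diff coeff_pCons' coeff_linear_power degree_diff_le degree_linear_power)
  show "card (prime_subfield CHAR('k) :: 'k set) \<ge> CHAR('k)"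
    by (simp add: card_prime_subfield)
  fix z :: 'k assume "z \<in> prime_subfield CHAR('k)"
  then show "poly ?Z z = poly ([:0, 1:] ^ CHAR('k) - [:0, 1:]) z"
    using assms
    by (simp add: poly_prod prod_zero_iff finite_prime_subfield prime_subfield_power_CHAR)
qed


lemma env_rels_eq: "env_rels sc br =
    {wd [a + b] - wd [a] - wd [b] | a b. True}
  \<union> {wd [sc c a] - c *\<^sub>w wd [a] | c a. True}
  \<union> {wd [a, b] - wd [b, a] - wd [br a b] | a b. True}"
  by (simp add: env_rels_def fun_diff_def wscale_def)

lemma red_rels_eq: "red_rels pm p \<xi> = {wd (replicate p x) - wd [pm x] - \<xi> x ^ p *\<^sub>w wd [] | x. True}"
  by (simp add: red_rels_def fun_diff_def wscale_def)

lemma red_gens_carrier: "env_rels sc br \<union> red_rels pm p \<xi> \<subseteq> carrier free_alg"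
  by (auto simp: env_rels_eq red_rels_eq)

lemma ideal_red_ideal: "ideal (red_ideal sc br pm p \<xi>) free_alg"
  unfolding red_ideal_def by (rule ring.genideal_ideal[OF ring_free_alg red_gens_carrier])

lemma red_gens_subset_red_ideal: "env_rels sc br \<union> red_rels pm p \<xi> \<subseteq> red_ideal sc br pm p \<xi>"
  unfolding red_ideal_def by (rule ring.genideal_self[OF ring_free_alg red_gens_carrier])

lemma red_ideal_additive: "wd [a + b] - wd [a] - wd [b] \<in> red_ideal sc br pm p \<xi>"
  and red_ideal_homogeneous: "wd [sc c a] - c *\<^sub>w wd [a] \<in> red_ideal sc br pm p \<xi>"
  and red_ideal_bracket: "wd [a, b] - wd [b, a] - wd [br a b] \<in> red_ideal sc br pm p \<xi>"
  and red_ideal_pth_power: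
    "wd (replicate p x) - wd [pm x] - \<xi> x ^ p *\<^sub>w wd [] \<in> red_ideal sc br pm p \<xi>"
  by (intro subsetD[OF red_gens_subset_red_ideal]; auto simp: env_rels_eq red_rels_eq)+

lemma red_ideal_subsetI:
  assumes "ideal S free_alg"
    and "\<And>a b. wd [a + b] - wd [a] - wd [b] \<in> S"
    and "\<And>c a. wd [sc c a] - c *\<^sub>w wd [a] \<in> S"
    and "\<And>a b. wd [a, b] - wd [b, a] - wd [br a b] \<in> S"
    and "\<And>x. wd (replicate p x) - wd [pm x] - \<xi> x ^ p *\<^sub>w wd [] \<in> S"
  shows "red_ideal sc br pm p \<xi> \<subseteq> S"
  unfolding red_ideal_def
  by (rule ring.genideal_minimal[OF ring_free_alg assms(1)])
    (use assms(2-) in \<open>auto simp: env_rels_eq red_rels_eq\<close>)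

lemma env_scalar_eq: "env_scalar sc br pm p \<xi> c = red_ideal sc br pm p \<xi> +>\<^bsub>free_alg\<^esub> c *\<^sub>w wd []"
  by (simp add: env_scalar_def wscale_def)

lemma red_ideal_zero_letter:
  fixes sc :: "'k::field \<Rightarrow> 'v::ab_group_add \<Rightarrow> 'v"
  shows "wd [0] \<in> red_ideal sc br pm p \<xi>"
proof -
  have "(-1) *\<^sub>w (wd [0 + 0] - wd [0] - wd [0]) \<in> red_ideal sc br pm p \<xi>"
    by (rule fa_ideal_wscale[OF ideal_red_ideal red_ideal_additive])
  also have "(-1) *\<^sub>w (wd [0 + 0] - wd [0] - wd [0]) = (wd [0 :: 'v] :: 'v list \<Rightarrow> 'k)"
    by (simp add: fun_eq_iff fun_apply_simps)
  finally show ?thesis .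
qed


section \<open>Elements central modulo an ideal\<close>

definition central_mod :: "('v list \<Rightarrow> 'k::field) set \<Rightarrow> ('v list \<Rightarrow> 'k) \<Rightarrow> bool"
  where "central_mod J x \<longleftrightarrow> x \<in> carrier free_alg \<and> (\<forall>h\<in>carrier free_alg. x \<star> h - h \<star> x \<in> J)"

lemma commutator_wmult_right:
  "x \<star> (g \<star> h) - (g \<star> h) \<star> x = (x \<star> g - g \<star> x) \<star> h + g \<star> (x \<star> h - h \<star> x)"
  by (simp add: wmult_diff_left wmult_diff_right wmult_assoc)

lemma commutator_wmult_left:
  "(x \<star> y) \<star> h - h \<star> (x \<star> y) = x \<star> (y \<star> h - h \<star> y) + (x \<star> h - h \<star> x) \<star> y"
  by (simp add: wmult_diff_left wmult_diff_right wmult_assoc)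

context
  fixes J :: "('v list \<Rightarrow> 'k::field) set"
  assumes J: "ideal J free_alg"
begin

lemma central_modI:
  assumes x: "x \<in> carrier free_alg" and letters: "\<And>v. x \<star> wd [v] - wd [v] \<star> x \<in> J"
  shows "central_mod J x"
  unfolding central_mod_def
proof (intro conjI ballI x)
  have words: "x \<star> wd w - wd w \<star> x \<in> J" for w
  proof (induction w)
    case (Cons v w)
    have split: "wd (v # w) = wd [v] \<star> wd w"
      by (simp add: wd_wmult_wd)
    show ?case
      unfolding split commutator_wmult_right
      by (intro fa_ideal_add[OF J] fa_ideal_wmult_left[OF J] fa_ideal_wmult_right[OF J]
          Cons.IH letters) simp_all
  qed (simp add: fa_ideal_zero[OF J])
  fix h :: "'v list \<Rightarrow> 'k" assume "h \<in> carrier free_alg"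
  then show "x \<star> h - h \<star> x \<in> J"
  proof (induction h rule: free_alg_induct)
    case (add g h)
    have "x \<star> (g + h) - (g + h) \<star> x = (x \<star> g - g \<star> x) + (x \<star> h - h \<star> x)"
      by (simp add: wmult_add_left wmult_add_right)
    then show ?case
      using add.IH by (simp add: fa_ideal_add[OF J])
  next
    case (wscale c g)
    have "x \<star> (c *\<^sub>w g) - (c *\<^sub>w g) \<star> x = c *\<^sub>w (x \<star> g - g \<star> x)"
      by (simp add: wmult_wscale_left wmult_wscale_right fun_eq_iff fun_apply_simps algebra_simps)
    then show ?case
      using wscale.IH by (simp add: fa_ideal_wscale[OF J])
  qed (simp_all add: fa_ideal_zero[OF J] words)
qed

lemma central_modD: "central_mod J x \<Longrightarrow> h \<in> carrier free_alg \<Longrightarrow> x \<star> h - h \<star> x \<in> J"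
  by (simp add: central_mod_def)

lemma central_mod_carrier: "central_mod J x \<Longrightarrow> x \<in> carrier free_alg"
  by (simp add: central_mod_def)

lemma central_mod_wd_Nil: "central_mod J (wd [])"
  by (rule central_modI) (simp_all add: fa_ideal_zero[OF J])

lemma central_mod_add: "central_mod J x \<Longrightarrow> central_mod J y \<Longrightarrow> central_mod J (x + y)"
proof -
  assume x: "central_mod J x" and y: "central_mod J y"
  have "(x + y) \<star> h - h \<star> (x + y) = (x \<star> h - h \<star> x) + (y \<star> h - h \<star> y)" for h
    by (simp add: wmult_add_left wmult_add_right)
  then show ?thesis
    using x y unfolding central_mod_def by (auto intro: fa_ideal_add[OF J])
qed

lemma central_mod_wscale: "central_mod J x \<Longrightarrow> central_mod J (c *\<^sub>w x)"
proof -
  assume x: "central_mod J x"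
  have "(c *\<^sub>w x) \<star> h - h \<star> (c *\<^sub>w x) = c *\<^sub>w (x \<star> h - h \<star> x)" for h
    by (simp add: wmult_wscale_left wmult_wscale_right fun_eq_iff fun_apply_simps algebra_simps)
  then show ?thesis
    using x unfolding central_mod_def by (auto intro: fa_ideal_wscale[OF J])
qed

lemma central_mod_wmult:
  assumes x: "central_mod J x" and y: "central_mod J y"
  shows "central_mod J (x \<star> y)"
  unfolding central_mod_def
proof (intro conjI ballI)
  show "x \<star> y \<in> carrier free_alg"
    using x y by (simp add: central_mod_carrier)
  fix h :: "'v list \<Rightarrow> 'k" assume "h \<in> carrier free_alg"
  then show "(x \<star> y) \<star> h - h \<star> (x \<star> y) \<in> J"
    unfolding commutator_wmult_left using x y
    by (intro fa_ideal_add[OF J] fa_ideal_wmult_left[OF J] fa_ideal_wmult_right[OF J] central_modD)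
      (simp_all add: central_mod_carrier)
qed

lemma central_mod_weval: "central_mod J x \<Longrightarrow> central_mod J (weval x P)"
proof (induction P)
  case 0
  then show ?case
    using central_mod_wscale[OF central_mod_wd_Nil, of 0] by simp
next
  case (pCons a P)
  then show ?case
    by (simp add: weval_pCons central_mod_add central_mod_wscale central_mod_wd_Nil
        central_mod_wmult)
qed

lemma ideal_annihilator_central_mod:
  assumes e: "central_mod J e"
  shows "ideal {y \<in> carrier free_alg. e \<star> y \<in> J} free_alg" (is "ideal ?S _")
proof (rule idealI[OF ring_free_alg])
  show "subgroup ?S (add_monoid free_alg)"
  proof (rule subgroup.intro)
    fix y assume "y \<in> ?S"
    moreover have "inv\<^bsub>add_monoid free_alg\<^esub> y = (-1) *\<^sub>w y" if "y \<in> carrier free_alg"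
      using a_minus_free_alg[OF fa_zero_closed that] that
      by (simp add: a_minus_def a_inv_def free_alg_simps diff_eq_add_wscale)
    ultimately show "inv\<^bsub>add_monoid free_alg\<^esub> y \<in> ?S"
      by (simp add: wmult_wscale_right fa_ideal_wscale[OF J])
  qed (auto simp: free_alg_simps wmult_add_right fa_ideal_closed[OF J])
next
  fix y x :: "'v list \<Rightarrow> 'k" assume "y \<in> ?S" and x: "x \<in> carrier free_alg"
  then have "e \<star> (x \<star> y) = (e \<star> x - x \<star> e) \<star> y + x \<star> (e \<star> y)"
    by (simp add: wmult_diff_left wmult_assoc)
  then show "x \<otimes>\<^bsub>free_alg\<^esub> y \<in> ?S"
    using \<open>y \<in> ?S\<close> x central_modD[OF e x] central_mod_carrier[OF e]
    by (simp add: free_alg_simps fa_ideal_closed[OF J])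
  show "y \<otimes>\<^bsub>free_alg\<^esub> x \<in> ?S"
    using \<open>y \<in> ?S\<close> x
    by (simp add: free_alg_simps flip: wmult_assoc) (simp add: fa_ideal_closed[OF J])
qed

lemma weval_add_const_mod:
  assumes Z: "Z \<in> J"
  shows "weval (Z + a *\<^sub>w wd []) P - poly P a *\<^sub>w wd [] \<in> J"
proof (induction P)
  case (pCons b P)
  let ?X = "Z + a *\<^sub>w wd []"
  have "weval ?X (pCons b P) - poly (pCons b P) a *\<^sub>w wd []
      = ?X \<star> (weval ?X P - poly P a *\<^sub>w wd []) + poly P a *\<^sub>w Z"
    by (simp add: weval_pCons wmult_bilinear fun_eq_iff fun_apply_simps algebra_simps)
  moreover have "?X \<in> carrier free_alg"
    using fa_ideal_carrier[OF J Z] by simp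
  ultimately show ?case
    using pCons.IH Z by (simp add: fa_ideal_closed[OF J])
qed (simp add: fa_ideal_zero[OF J])

end


lemma restrict_eq_restrict_iff: "restrict f A = restrict g A \<longleftrightarrow> (\<forall>x\<in>A. f x = g x)"
  by (auto simp: fun_eq_iff restrict_def)

lemma ring_ring_prod:
  assumes "\<And>i. i \<in> I \<Longrightarrow> ring (R i)"
  shows "ring (ring_prod I R)"
proof -
  have mem: "x i \<in> carrier (R i)" if "x \<in> (\<Pi>\<^sub>E i\<in>I. carrier (R i))" and "i \<in> I" for x i
    using that by auto
  have restrict_eq: "restrict f I = x \<longleftrightarrow> (\<forall>i\<in>I. f i = x i)"
    if "x \<in> (\<Pi>\<^sub>E i\<in>I. carrier (R i))" for f x
    using that by (auto simp: fun_eq_iff PiE_def extensional_def)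
  note simps = ring_prod_def ring.ring_simprules[OF assms] monoid.r_one[OF ring.is_monoid[OF assms]]
    mem restrict_eq
  show ?thesis
  proof (rule ringI)
    show "abelian_group (ring_prod I R)"
    proof (rule abelian_groupI)
      fix x assume "x \<in> carrier (ring_prod I R)"
      then show "\<exists>y\<in>carrier (ring_prod I R). y \<oplus>\<^bsub>ring_prod I R\<^esub> x = \<zero>\<^bsub>ring_prod I R\<^esub>"
        by (intro bexI[of _ "\<lambda>i\<in>I. \<ominus>\<^bsub>R i\<^esub> x i"]) (auto simp: simps intro!: restrict_ext)
    qed (auto simp: simps intro!: restrict_ext)
    show "monoid (ring_prod I R)"
      by (rule monoidI) (auto simp: simps intro!: restrict_ext)
  qed (auto simp: simps intro!: restrict_ext)
qed


section \<open>Splitting the enveloping algebra of the central extension\<close>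

locale central_extension_splitting =
  fixes sc :: "'k::field \<Rightarrow> 'l::ab_group_add \<Rightarrow> 'l"
    and br :: "'l \<Rightarrow> 'l \<Rightarrow> 'l"
    and pm :: "'l \<Rightarrow> 'l"
    and p :: nat
    and \<chi> :: "'l \<Rightarrow> 'k"
  assumes prime_p: "prime p"
    and CHAR_eq: "CHAR('k) = p"
    and sc_zero: "sc a 0 = 0"
    and br_zero: "br x 0 = 0"
    and pm_zero: "pm 0 = 0"
    and chi_zero: "\<chi> 0 = 0"
begin

abbreviation Fp :: "'k set"
  where "Fp \<equiv> prime_subfield p"

definition ext_ideal :: "(('l \<times> 'k) list \<Rightarrow> 'k) set"
  where "ext_ideal = red_ideal (ext_scale sc) (ext_br br) (ext_pmap pm p \<chi>) p (\<lambda>_. 0)"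

definition fiber_ideal :: "'k \<Rightarrow> ('l list \<Rightarrow> 'k) set"
  where "fiber_ideal j = red_ideal sc br pm p (\<lambda>x. j * \<chi> x)"

definition c_elem :: "('l \<times> 'k) list \<Rightarrow> 'k"
  where "c_elem = wd [(0, 1)]"

abbreviation specialize :: "'k \<Rightarrow> (('l \<times> 'k) list \<Rightarrow> 'k) \<Rightarrow> 'l list \<Rightarrow> 'k"
  where "specialize j \<equiv> wsubst (\<lambda>v. wd [fst v] + (snd v * j) *\<^sub>w wd [])"

abbreviation embed :: "('l list \<Rightarrow> 'k) \<Rightarrow> ('l \<times> 'k) list \<Rightarrow> 'k"
  where "embed \<equiv> wsubst (\<lambda>x. wd [(x, 0)])"

definition idempotent :: "'k \<Rightarrow> ('l \<times> 'k) list \<Rightarrow> 'k"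
  where "idempotent i = weval c_elem (lagrange_basis Fp i)"

lemma p_pos: "p > 0"
  using prime_p prime_gt_0_nat by blast

lemma power_p_prime_subfield: "j \<in> Fp \<Longrightarrow> j ^ p = j"
  using prime_subfield_power_CHAR[of j] prime_p by (simp add: CHAR_eq)

lemma ideal_ext_ideal: "ideal ext_ideal free_alg"
  and ideal_fiber_ideal: "ideal (fiber_ideal j) free_alg"
  by (simp_all add: ext_ideal_def fiber_ideal_def ideal_red_ideal)

lemma specialize_generators:
  assumes j: "j \<in> Fp"
  shows "ext_ideal \<subseteq> {f \<in> carrier free_alg. specialize j f \<in> fiber_ideal j}" (is "_ \<subseteq> ?S")
  unfolding ext_ideal_def
proof (rule red_ideal_subsetI)
  show "ideal ?S free_alg"
    by (rule ring_hom_ring.ideal_vimage[OF ring_hom_wsubst ideal_fiber_ideal]) simp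
  fix a b :: "'l \<times> 'k" and c :: 'k
  have "specialize j (wd [a + b] - wd [a] - wd [b]) = wd [fst a + fst b] - wd [fst a] - wd [fst b]"
    by (simp add: wsubst_diff) (simp add: fun_eq_iff fun_apply_simps algebra_simps)
  then show "wd [a + b] - wd [a] - wd [b] \<in> ?S"
    by (simp add: fiber_ideal_def red_ideal_additive)
  have "specialize j (wd [ext_scale sc c a] - c *\<^sub>w wd [a]) = wd [sc c (fst a)] - c *\<^sub>w wd [fst a]"
    by (simp add: wsubst_diff wsubst_wscale ext_scale_def)
      (simp add: fun_eq_iff fun_apply_simps algebra_simps)
  then show "wd [ext_scale sc c a] - c *\<^sub>w wd [a] \<in> ?S"
    by (simp add: fiber_ideal_def red_ideal_homogeneous)
  have "specialize j (wd [a, b] - wd [b, a] - wd [ext_br br a b])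
      = wd [fst a, fst b] - wd [fst b, fst a] - wd [br (fst a) (fst b)]"
    by (simp add: wsubst_diff wprod_Cons ext_br_def)
      (simp add: wmult_bilinear wd_wmult_wd fun_eq_iff fun_apply_simps algebra_simps)
  then show "wd [a, b] - wd [b, a] - wd [ext_br br a b] \<in> ?S"
    by (simp add: fiber_ideal_def red_ideal_bracket)
  have "specialize j (wd (replicate p a)) = wpow (wd [fst a] + (snd a * j) *\<^sub>w wd []) CHAR('k)"
    by (simp add: wprod_replicate CHAR_eq)
  also have "\<dots> = wd (replicate p (fst a)) + (snd a * j) ^ p *\<^sub>w wd []"
    using wpow_add_wscale_CHAR[of "wd [fst a] :: 'l list \<Rightarrow> 'k"] prime_p
    by (simp add: CHAR_eq wpow_letter)
  finally have "specialize j
        (wd (replicate p a) - wd [ext_pmap pm p \<chi> a] - ((\<lambda>_. 0) a) ^ p *\<^sub>w wd [])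
      = wd (replicate p (fst a)) - wd [pm (fst a)] - (j * \<chi> (fst a)) ^ p *\<^sub>w wd []"
    using p_pos power_p_prime_subfield[OF j]
    by (simp add: wsubst_diff ext_pmap_def power_0_left)
      (simp add: fun_eq_iff fun_apply_simps algebra_simps power_mult_distrib)
  then show "wd (replicate p a) - wd [ext_pmap pm p \<chi> a] - ((\<lambda>_. 0) a) ^ p *\<^sub>w wd [] \<in> ?S"
    using red_ideal_pth_power[where \<xi> = "\<lambda>x. j * \<chi> x" and x = "fst a"]
    by (simp add: fiber_ideal_def)
qed

lemma specialize_ext_ideal: "j \<in> Fp \<Longrightarrow> f \<in> ext_ideal \<Longrightarrow> specialize j f \<in> fiber_ideal j"
  using specialize_generators by blast

lemmas ext_ideal_closed = fa_ideal_closed[OF ideal_ext_ideal]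

lemma central_mod_c_elem: "central_mod ext_ideal c_elem"
proof (rule central_modI[OF ideal_ext_ideal])
  fix v :: "'l \<times> 'k"
  have "ext_br br v (0, 1) = 0"
    by (simp add: ext_br_def br_zero zero_prod_def)
  then have eq: "c_elem \<star> wd [v] - wd [v] \<star> c_elem
      = (-1) *\<^sub>w (wd [v, (0, 1)] - wd [(0, 1), v] - wd [ext_br br v (0, 1)]) - wd [0]"
    by (simp add: c_elem_def wd_wmult_wd fun_eq_iff fun_apply_simps)
  have "wd [v, (0, 1)] - wd [(0, 1), v] - wd [ext_br br v (0, 1)] \<in> ext_ideal" "wd [0] \<in> ext_ideal"
    unfolding ext_ideal_def by (rule red_ideal_bracket red_ideal_zero_letter)+
  then show "c_elem \<star> wd [v] - wd [v] \<star> c_elem \<in> ext_ideal"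
    unfolding eq
    by (blast intro: fa_ideal_diff[OF ideal_ext_ideal] fa_ideal_wscale[OF ideal_ext_ideal])
qed (simp add: c_elem_def)

lemma c_elem_power_mod: "wpow c_elem p - c_elem \<in> ext_ideal"
proof -
  let ?c = "(0 :: 'l, 1 :: 'k)"
  have "wd (replicate p ?c) - wd [ext_pmap pm p \<chi> ?c] - ((\<lambda>_. 0) ?c) ^ p *\<^sub>w wd [] \<in> ext_ideal"
    unfolding ext_ideal_def by (rule red_ideal_pth_power)
  also have "wd (replicate p ?c) - wd [ext_pmap pm p \<chi> ?c] - ((\<lambda>_. 0) ?c) ^ p *\<^sub>w wd []
      = wpow c_elem p - c_elem"
    using p_pos by (simp add: ext_pmap_def pm_zero chi_zero power_0_left c_elem_def wpow_letter)
  finally show ?thesis .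
qed

lemma central_mod_idempotent: "central_mod ext_ideal (idempotent i)"
  unfolding idempotent_def by (rule central_mod_weval[OF ideal_ext_ideal central_mod_c_elem])

lemma idempotent_closed [simp]: "idempotent i \<in> carrier free_alg"
  by (rule central_mod_carrier[OF ideal_ext_ideal central_mod_idempotent])

lemma sum_idempotent: "(\<Sum>i\<in>Fp. idempotent i) = wd []"
proof -
  have "(0 :: 'k) \<in> Fp"
    using p_pos by (force simp: prime_subfield_def)
  then have "(\<Sum>i\<in>Fp. lagrange_basis Fp i) = 1"
    by (intro sum_lagrange_basis finite_prime_subfield) blast
  then show ?thesis
    by (simp add: idempotent_def flip: weval_sum)
qed

lemma idempotent_c_elem_mod:
  assumes i: "i \<in> Fp"
  shows "idempotent i \<star> (c_elem - i *\<^sub>w wd []) \<in> ext_ideal"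
proof -
  define \<kappa> where "\<kappa> = inverse (\<Prod>j\<in>Fp - {i}. i - j)"
  have "c_elem - i *\<^sub>w wd [] = weval c_elem [:- i, 1:]"
    by (simp add: weval_pCons weval_const fun_eq_iff fun_apply_simps)
  then have "idempotent i \<star> (c_elem - i *\<^sub>w wd [])
      = weval c_elem (lagrange_basis Fp i) \<star> weval c_elem [:- i, 1:]"
    by (simp add: idempotent_def)
  also have "\<dots> = weval c_elem (lagrange_basis Fp i * [:- i, 1:])"
    by (rule weval_mult[symmetric])
  also have "\<dots> = \<kappa> *\<^sub>w (wpow c_elem p - c_elem)"
    unfolding lagrange_basis_mult_linear[OF finite_prime_subfield i]
      prod_prime_subfield_linear[OF prime_p[folded CHAR_eq], unfolded CHAR_eq]
    by (simp add: \<kappa>_def weval_smult weval_diff weval_power weval_monom1 c_elem_def)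
  finally show ?thesis
    by (simp add: fa_ideal_wscale[OF ideal_ext_ideal c_elem_power_mod])
qed

lemma idempotent_letter_mod:
  assumes i: "i \<in> Fp"
  shows "idempotent i \<star> (wd [v] - embed (specialize i (wd [v]))) \<in> ext_ideal"
proof -
  obtain x a where v: "v = (x, a)"
    by fastforce
  have "ext_scale sc a (0, 1) = (0, a)" "(x, 0) + (0, a) = v"
    by (simp_all add: ext_scale_def sc_zero v)
  then have eq: "wd [v] - embed (specialize i (wd [v]))
      = (wd [(x, 0) + (0, a)] - wd [(x, 0)] - wd [(0, a)])
        + (wd [ext_scale sc a (0, 1)] - a *\<^sub>w wd [(0, 1)]) + a *\<^sub>w (c_elem - i *\<^sub>w wd [])"
    by (simp add: v wsubst_add wsubst_wscale c_elem_def)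
      (simp add: fun_eq_iff fun_apply_simps algebra_simps)
  have "wd [(x, 0) + (0, a)] - wd [(x, 0)] - wd [(0, a)] \<in> ext_ideal"
    and "wd [ext_scale sc a (0, 1)] - a *\<^sub>w wd [(0, 1)] \<in> ext_ideal"
    unfolding ext_ideal_def by (rule red_ideal_additive red_ideal_homogeneous)+
  then show ?thesis
    unfolding eq wmult_add_right wmult_wscale_right
    by (intro fa_ideal_add[OF ideal_ext_ideal] fa_ideal_wscale[OF ideal_ext_ideal]
        fa_ideal_wmult_left[OF ideal_ext_ideal] idempotent_closed idempotent_c_elem_mod[OF i])
qed

lemma idempotent_embed_specialize:
  assumes i: "i \<in> Fp" and f: "f \<in> carrier free_alg"
  shows "idempotent i \<star> (f - embed (specialize i f)) \<in> ext_ideal"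
  using f
proof (induction f rule: free_alg_induct)
  case (add g h)
  then have eq: "g + h - embed (specialize i (g + h))
      = (g - embed (specialize i g)) + (h - embed (specialize i h))"
    by (simp add: wsubst_add algebra_simps)
  show ?case
    unfolding eq wmult_add_right using add.IH by (rule fa_ideal_add[OF ideal_ext_ideal])
next
  case (wscale c g)
  then have eq: "c *\<^sub>w g - embed (specialize i (c *\<^sub>w g)) = c *\<^sub>w (g - embed (specialize i g))"
    by (simp add: wsubst_wscale fun_eq_iff fun_apply_simps algebra_simps)
  show ?case
    unfolding eq wmult_wscale_right using wscale.IH by (rule fa_ideal_wscale[OF ideal_ext_ideal])
next
  case (wd w)
  show ?case
  proof (induction w)
    case (Cons v w)
    let ?E = "idempotent i" and ?T = "\<lambda>f. embed (specialize i f)"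
    have split: "wd (v # w) = wd [v] \<star> wd w"
      by (simp add: wd_wmult_wd)
    have hom: "?T (wd [v] \<star> wd w) = ?T (wd [v]) \<star> ?T (wd w)"
      by (simp only: wsubst_wmult wd_closed wsubst_closed fa_add_closed wscale_closed)
    have "e \<star> (x \<star> y - x' \<star> y')
        = (e \<star> (x - x')) \<star> y + (e \<star> x' - x' \<star> e) \<star> (y - y') + x' \<star> (e \<star> (y - y'))"
      for e x x' y y' :: "('l \<times> 'k) list \<Rightarrow> 'k"
      by (simp add: wmult_bilinear wmult_assoc algebra_simps)
    moreover have "?E \<star> ?T (wd [v]) - ?T (wd [v]) \<star> ?E \<in> ext_ideal"
      by (rule central_modD[OF ideal_ext_ideal central_mod_idempotent]) simp
    ultimately show ?case
      unfolding split hom using idempotent_letter_mod[OF i] Cons.IH by (simp add: ext_ideal_closed)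
  qed (simp add: fa_ideal_zero[OF ideal_ext_ideal])
qed (simp add: fa_ideal_zero[OF ideal_ext_ideal])

lemma embed_additive: "embed (wd [a + b] - wd [a] - wd [b]) \<in> ext_ideal"
  and embed_homogeneous: "embed (wd [sc c a] - c *\<^sub>w wd [a]) \<in> ext_ideal"
  and embed_bracket: "embed (wd [a, b] - wd [b, a] - wd [br a b]) \<in> ext_ideal"
proof -
  have "embed (wd [a + b] - wd [a] - wd [b]) = wd [(a, 0) + (b, 0)] - wd [(a, 0)] - wd [(b, 0)]"
    by (simp add: wsubst_diff)
  then show "embed (wd [a + b] - wd [a] - wd [b]) \<in> ext_ideal"
    by (simp only: ext_ideal_def red_ideal_additive)
  have "embed (wd [sc c a] - c *\<^sub>w wd [a]) = wd [ext_scale sc c (a, 0)] - c *\<^sub>w wd [(a, 0)]"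
    by (simp add: wsubst_diff wsubst_wscale ext_scale_def)
  then show "embed (wd [sc c a] - c *\<^sub>w wd [a]) \<in> ext_ideal"
    by (simp only: ext_ideal_def red_ideal_homogeneous)
  have "embed (wd [a, b] - wd [b, a] - wd [br a b])
      = wd [(a, 0), (b, 0)] - wd [(b, 0), (a, 0)] - wd [ext_br br (a, 0) (b, 0)]"
    by (simp add: wsubst_diff wprod_Cons wd_wmult_wd ext_br_def)
  then show "embed (wd [a, b] - wd [b, a] - wd [br a b]) \<in> ext_ideal"
    by (simp only: ext_ideal_def red_ideal_bracket)
qed

lemma idempotent_embed_pth_power:
  assumes i: "i \<in> Fp"
  shows "idempotent i \<star> embed (wd (replicate p x) - wd [pm x] - (i * \<chi> x) ^ p *\<^sub>w wd []) \<in> ext_ideal"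
proof -
  let ?u = "\<chi> x ^ p"
  let ?x = "(x, 0 :: 'k)"
  have "wd (replicate p ?x) - wd [ext_pmap pm p \<chi> ?x] - ((\<lambda>_. 0) ?x) ^ p *\<^sub>w wd [] \<in> ext_ideal"
    and "wd [(pm x, 0) + (0, ?u)] - wd [(pm x, 0)] - wd [(0, ?u)] \<in> ext_ideal"
    and "wd [ext_scale sc ?u (0, 1)] - ?u *\<^sub>w wd [(0, 1)] \<in> ext_ideal"
    unfolding ext_ideal_def by (rule red_ideal_pth_power red_ideal_additive red_ideal_homogeneous)+
  moreover have "embed (wd (replicate p x) - wd [pm x] - (i * \<chi> x) ^ p *\<^sub>w wd [])
      = (wd (replicate p ?x) - wd [ext_pmap pm p \<chi> ?x] - ((\<lambda>_. 0) ?x) ^ p *\<^sub>w wd [])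
        + (wd [(pm x, 0) + (0, ?u)] - wd [(pm x, 0)] - wd [(0, ?u)])
        + (wd [ext_scale sc ?u (0, 1)] - ?u *\<^sub>w wd [(0, 1)]) + ?u *\<^sub>w (c_elem - i *\<^sub>w wd [])"
    using p_pos power_p_prime_subfield[OF i]
    by (simp add: wsubst_diff wsubst_wscale wprod_replicate wpow_letter ext_pmap_def ext_scale_def
        sc_zero c_elem_def power_0_left)
      (simp add: fun_eq_iff fun_apply_simps algebra_simps power_mult_distrib)
  ultimately show ?thesis
    using idempotent_c_elem_mod[OF i]
    by (simp add: wmult_add_right wmult_wscale_right ext_ideal_closed)
qed

lemma idempotent_embed_fiber:
  assumes i: "i \<in> Fp" and g: "g \<in> fiber_ideal i"
  shows "idempotent i \<star> embed g \<in> ext_ideal"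
proof -
  let ?S = "{g \<in> carrier free_alg. embed g \<in> {y \<in> carrier free_alg. idempotent i \<star> y \<in> ext_ideal}}"
  have "fiber_ideal i \<subseteq> ?S"
    unfolding fiber_ideal_def
  proof (rule red_ideal_subsetI)
    show "ideal ?S free_alg"
      using ring_hom_ring.ideal_vimage[OF ring_hom_wsubst[of "\<lambda>x. wd [(x, 0)]"]
          ideal_annihilator_central_mod[OF ideal_ext_ideal central_mod_idempotent[of i]]]
      by simp
  qed (use embed_additive embed_homogeneous embed_bracket idempotent_embed_pth_power[OF i] in
      \<open>simp_all add: fa_ideal_wmult_left[OF ideal_ext_ideal]\<close>)
  then show ?thesis
    using g by blast
qed

lemma mem_ext_ideal_if_specializations:
  assumes f: "f \<in> carrier free_alg" and fibers: "\<And>i. i \<in> Fp \<Longrightarrow> specialize i f \<in> fiber_ideal i"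
  shows "f \<in> ext_ideal"
proof -
  have "f = (\<Sum>i\<in>Fp. idempotent i) \<star> f"
    by (simp add: sum_idempotent)
  also have "\<dots> = (\<Sum>i\<in>Fp. idempotent i \<star> (f - embed (specialize i f))
      + idempotent i \<star> embed (specialize i f))"
    by (simp add: wmult_sum_left wmult_diff_right)
  also have "\<dots> \<in> ext_ideal"
    using f fibers by (intro fa_ideal_sum[OF ideal_ext_ideal] fa_ideal_add[OF ideal_ext_ideal]
        idempotent_embed_specialize idempotent_embed_fiber)
  finally show ?thesis .
qed

lemma specialize_embed: "f \<in> carrier free_alg \<Longrightarrow> specialize j (embed f) = f"
proof (induction f rule: free_alg_induct)
  case (wd w)
  show ?case
    by (induction w) (simp_all add: wprod_Cons wsubst_wmult wd_wmult_wd)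
qed (simp_all add: wsubst_add wsubst_wscale)

lemma specialize_idempotent:
  assumes "i \<in> Fp" and "j \<in> Fp"
  shows "specialize j (idempotent i) - (if j = i then 1 else 0) *\<^sub>w wd [] \<in> fiber_ideal j"
proof -
  have "specialize j (idempotent i) = weval (wd [0] + j *\<^sub>w wd []) (lagrange_basis Fp i)"
    by (simp add: idempotent_def wsubst_weval c_elem_def)
  moreover have "wd [0] \<in> fiber_ideal j"
    by (simp add: fiber_ideal_def red_ideal_zero_letter)
  ultimately show ?thesis
    using weval_add_const_mod[OF ideal_fiber_ideal, of "wd [0]" j j "lagrange_basis Fp i"]
      poly_lagrange_basis[OF finite_prime_subfield assms]
    by simp
qed

lemma specialize_sum_idempotent_embed:
  assumes j: "j \<in> Fp" and g: "\<And>i. i \<in> Fp \<Longrightarrow> g i \<in> carrier free_alg"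
  shows "specialize j (\<Sum>i\<in>Fp. idempotent i \<star> embed (g i)) - g j \<in> fiber_ideal j"
proof -
  have "specialize j (\<Sum>i\<in>Fp. idempotent i \<star> embed (g i)) - g j
      = (\<Sum>i\<in>Fp. specialize j (idempotent i) \<star> g i) - g j"
    using g by (simp add: wsubst_sum wsubst_wmult specialize_embed)
  also have "\<dots>
      = (\<Sum>i\<in>Fp. (specialize j (idempotent i) - (if j = i then 1 else 0) *\<^sub>w wd []) \<star> g i)"
  proof -
    have "((if j = i then 1 else 0) *\<^sub>w wd []) \<star> g i = (if j = i then g i else 0)" for i
      by (simp add: wmult_wscale_left)
    then show ?thesis
      using j by (simp add: wmult_diff_left sum_subtractf sum.delta'[OF finite_prime_subfield])
  qed
  also have "\<dots> \<in> fiber_ideal j"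
    using g j
    by (intro fa_ideal_sum[OF ideal_fiber_ideal] fa_ideal_wmult_right[OF ideal_fiber_ideal]
        specialize_idempotent) auto
  finally show ?thesis .
qed

definition split_hom :: "(('l \<times> 'k) list \<Rightarrow> 'k) \<Rightarrow> 'k \<Rightarrow> ('l list \<Rightarrow> 'k) set"
  where "split_hom f = (\<lambda>j\<in>Fp. fiber_ideal j +>\<^bsub>free_alg\<^esub> specialize j f)"

abbreviation fibers :: "('k \<Rightarrow> ('l list \<Rightarrow> 'k) set) ring"
  where "fibers \<equiv> ring_prod Fp (\<lambda>j. free_alg Quot fiber_ideal j)"

lemma ring_hom_ring_split_hom: "ring_hom_ring free_alg fibers split_hom"
proof (rule ring_hom_ringI2[OF ring_free_alg ring_ring_prod])
  show "ring (free_alg Quot fiber_ideal j)" for j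
    by (rule ideal.quotient_is_ring[OF ideal_fiber_ideal])
  note quot_hom = ideal.rcos_ring_hom[OF ideal_fiber_ideal]
  show "split_hom \<in> ring_hom free_alg fibers"
  proof (rule ring_hom_memI)
    fix f g :: "('l \<times> 'k) list \<Rightarrow> 'k"
    assume f: "f \<in> carrier free_alg" and g: "g \<in> carrier free_alg"
    show "split_hom f \<in> carrier fibers"
      using ring_hom_closed[OF quot_hom] by (simp add: split_hom_def ring_prod_def)
    show "split_hom (f \<otimes>\<^bsub>free_alg\<^esub> g) = split_hom f \<otimes>\<^bsub>fibers\<^esub> split_hom g"
      using f g ring_hom_mult[OF quot_hom]
      by (simp add: split_hom_def ring_prod_def free_alg_simps wsubst_wmult cong: restrict_cong)
    show "split_hom (f \<oplus>\<^bsub>free_alg\<^esub> g) = split_hom f \<oplus>\<^bsub>fibers\<^esub> split_hom g"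
      using f g ring_hom_add[OF quot_hom]
      by (simp add: split_hom_def ring_prod_def free_alg_simps wsubst_add cong: restrict_cong)
  next
    show "split_hom \<one>\<^bsub>free_alg\<^esub> = \<one>\<^bsub>fibers\<^esub>"
      using ring_hom_one[OF quot_hom]
      by (simp add: split_hom_def ring_prod_def free_alg_simps cong: restrict_cong)
  qed
qed

lemma a_kernel_split_hom: "a_kernel free_alg fibers split_hom = ext_ideal"
proof -
  have zero: "\<zero>\<^bsub>fibers\<^esub> = (\<lambda>j\<in>Fp. fiber_ideal j)"
    by (simp add: ring_prod_def FactRing_def)
  have "split_hom f = \<zero>\<^bsub>fibers\<^esub> \<longleftrightarrow> (\<forall>j\<in>Fp. specialize j f \<in> fiber_ideal j)"
    if "f \<in> carrier free_alg" for f
    using that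
    by (simp add: zero split_hom_def restrict_eq_restrict_iff
        fa_rcos_eq_ideal_iff[OF ideal_fiber_ideal])
  then show ?thesis
    unfolding a_kernel_def'
    using mem_ext_ideal_if_specializations specialize_ext_ideal fa_ideal_carrier[OF ideal_ext_ideal]
    by auto
qed

lemma split_hom_surjective: "split_hom ` carrier free_alg = carrier fibers"
proof
  show "split_hom ` carrier free_alg \<subseteq> carrier fibers"
    using ring_hom_closed[OF ring_hom_ring.homh[OF ring_hom_ring_split_hom]] by blast
next
  show "carrier fibers \<subseteq> split_hom ` carrier free_alg"
  proof
    fix b assume b: "b \<in> carrier fibers"
    then have "\<forall>j\<in>Fp. \<exists>g\<in>carrier free_alg. b j = fiber_ideal j +>\<^bsub>free_alg\<^esub> g"
      by (auto simp: ring_prod_def carrier_free_alg_Quot[OF ideal_fiber_ideal])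
    then obtain g
      where g: "\<And>j. j \<in> Fp \<Longrightarrow> g j \<in> carrier free_alg \<and> b j = fiber_ideal j +>\<^bsub>free_alg\<^esub> g j"
      by metis
    define h where "h = (\<Sum>i\<in>Fp. idempotent i \<star> embed (g i))"
    have h: "h \<in> carrier free_alg"
      using g by (auto simp: h_def intro!: fa_sum_closed)
    have "specialize j h - g j \<in> fiber_ideal j" if "j \<in> Fp" for j
      unfolding h_def using that g by (simp add: specialize_sum_idempotent_embed)
    then have "split_hom h = b"
      using b g h ring_hom_closed[OF ring_hom_ring.homh[OF ring_hom_ring_split_hom] h]
      by (intro PiE_ext[of _ Fp "\<lambda>j. carrier (free_alg Quot fiber_ideal j)"])
        (simp_all add: split_hom_def ring_prod_def fa_rcos_eq_iff[OF ideal_fiber_ideal])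
    with h show "b \<in> split_hom ` carrier free_alg"
      by blast
  qed
qed

theorem alg_iso_reduced_env:
  "alg_iso
    (reduced_env (ext_scale sc) (ext_br br) (ext_pmap pm p \<chi>) p (\<lambda>_. 0))
    (ring_prod Fp (\<lambda>i. reduced_env sc br pm p (\<lambda>x. i * \<chi> x)))
    (env_scalar (ext_scale sc) (ext_br br) (ext_pmap pm p \<chi>) p (\<lambda>_. 0))
    (\<lambda>c. \<lambda>i\<in>Fp. env_scalar sc br pm p (\<lambda>x. i * \<chi> x) c)"
proof -
  let ?\<phi> = "\<lambda>X. the_elem (split_hom ` X)"
  have "?\<phi> \<in> ring_iso (free_alg Quot ext_ideal) fibers"
    using ring_hom_ring.FactRing_iso_set[OF ring_hom_ring_split_hom split_hom_surjective]
    by (simp add: a_kernel_split_hom)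
  moreover have "?\<phi> (ext_ideal +>\<^bsub>free_alg\<^esub> c *\<^sub>w wd [])
      = (\<lambda>j\<in>Fp. fiber_ideal j +>\<^bsub>free_alg\<^esub> c *\<^sub>w wd [])" for c
    using ring_hom_ring.the_elem_simp[OF ring_hom_ring_split_hom, of "c *\<^sub>w wd []"]
    by (simp add: a_kernel_split_hom split_hom_def wsubst_wscale)
  ultimately show ?thesis
    unfolding alg_iso_def reduced_env_def env_scalar_eq
      ext_ideal_def[symmetric] fiber_ideal_def[symmetric]
    by blast
qed

end

lemma linear_map_zero: "Vector_Spaces.linear s1 s2 f \<Longrightarrow> f 0 = 0"
  by (metis module_hom.zero module_hom_iff_linear)

theorem corollary1p3p5:
  fixes sc :: "'k::field \<Rightarrow> 'l::ab_group_add \<Rightarrow> 'l"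
    and br :: "'l \<Rightarrow> 'l \<Rightarrow> 'l"
    and pm :: "'l \<Rightarrow> 'l"
    and p :: nat
    and \<chi> :: "'l \<Rightarrow> 'k"
  assumes "prime p"
    and "CHAR('k) = p"
    and "alg_closed TYPE('k)"
    and "restricted_lie_algebra sc br pm p"
    and "\<exists>B. finite B \<and> module.span sc B = UNIV"
    and "Vector_Spaces.linear sc (*) \<chi>"
  shows "alg_iso
    (reduced_env (ext_scale sc) (ext_br br) (ext_pmap pm p \<chi>) p (\<lambda>_. 0))
    (ring_prod (prime_subfield p) (\<lambda>i. reduced_env sc br pm p (\<lambda>x. i * \<chi> x)))
    (env_scalar (ext_scale sc) (ext_br br) (ext_pmap pm p \<chi>) p (\<lambda>_. 0))
    (\<lambda>c. \<lambda>i\<in>prime_subfield p. env_scalar sc br pm p (\<lambda>x. i * \<chi> x) c)"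
proof -
  have "vector_space sc" and br_linear: "Vector_Spaces.linear sc sc (br x)"
    and pm_scale: "pm (sc c y) = sc (c ^ p) (pm y)" for x c y
    using assms(4) by (simp_all add: restricted_lie_algebra_def lie_algebra_def)
  then have sc_zero: "sc a 0 = 0" and zero_sc: "sc 0 y = 0" for a y
    by (simp_all add: module_iff_vector_space[symmetric] module.scale_zero_right
        module.scale_zero_left)
  have "pm 0 = 0"
    using pm_scale[of 0 0] prime_gt_0_nat[OF assms(1)] by (simp add: sc_zero zero_sc power_0_left)
  then interpret central_extension_splitting sc br pm p \<chi>
    using assms(1,2,6) sc_zero linear_map_zero[OF br_linear] linear_map_zero
    by unfold_locales auto
  show ?thesis
    by (rule alg_iso_reduced_env)
qed

end
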